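(* Let $\eta,\rho\in\{1,2\}$ with $\eta\neq\rho$. Let $q\equiv 3\pmod 4$ and $r\equiv s\equiv 5\pmod 8$ be prime numbers such that $\left(\frac{q}{r}\right)=\left(\frac{q}{s}\right)=(-1)^{\delta_{\eta,2}}$ and $\left(\frac{r}{s}\right)=1$. \begin{enumerate} \item Write $\varepsilon_{\eta qrs}=\gamma+\gamma'\sqrt{\eta qrs}$ with integers $\gamma,\gamma'$. Then exactly one of the three numbers $2^{\delta_{\eta,1}}q(\gamma-1)$, $2r(\gamma+(-1)^{\delta_{\eta,2}})$, $2s(\gamma+(-1)^{\delta_{\eta,2}})$ is a square in $\mathbb{N}$. Moreover, there exist integers $\gamma_1,\gamma_2$ such that: (a) if $2^{\delta_{\eta,1}}q(\gamma-1)$ is a square, then $\sqrt{\eta\varepsilon_{\eta qrs}}=\gamma_1\sqrt{q}+\gamma_2\sqrt{\eta rs}$ and $\eta=-q\gamma_1^2+\eta rs\gamma_2^2$; (b) if $2r(\gamma+(-1)^{\delta_{\eta,2}})$ is a square, then $\sqrt{\eta\varepsilon_{\eta qrs}}=\gamma_1\sqrt{\eta r}+\gamma_2\sqrt{qs}$ and $\eta=(-1)^{\delta_{\eta,2}}\eta r\gamma_1^2+(-1)^{\delta_{\eta,1}}qs\gamma_2^2$; (c) if $2s(\gamma+(-1)^{\delta_{\eta,2}})$ is a square, then $\sqrt{\eta\varepsilon_{\eta qrs}}=\gamma_1\sqrt{\eta s}+\gamma_2\sqrt{qr}$ and $\eta=(-1)^{\delta_{\eta,2}}\eta s\gamma_1^2+(-1)^{\delta_{\eta,1}}qr\gamma_2^2$.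 \item Write $\varepsilon_{\rho qrs}=x+y\sqrt{\rho qrs}$ with integers $x,y$. Then exactly one of the two numbers $2^{\delta_{\rho,2}}q(x+1)$ and $2^{\delta_{\rho,2}}q(x-1)$ is a square in $\mathbb{N}$. Moreover, there exist integers $y_1,y_2$ such that: (a) if $2^{\delta_{\rho,2}}q(x+1)$ is a square, then $\sqrt{2\varepsilon_{\rho qrs}}=y_1\sqrt{\rho q}+y_2\sqrt{rs}$ and $2=\rho q y_1^2-rsy_2^2$; (b) if $2^{\delta_{\rho,2}}q(x-1)$ is a square, then $\sqrt{2\varepsilon_{\rho qrs}}=y_1\sqrt{\rho q}+y_2\sqrt{rs}$ and $2=-\rho q y_1^2+rsy_2^2$. \end{enumerate}
   Context: $\delta_{a,b}$ denotes the Kronecker delta. $\left(\frac{\cdot}{\cdot}\right)$ is the Legendre symbol. For a squarefree integer $d>1$, $\varepsilon_d$ denotes the fundamental unit ($>1$) of the real quadratic field $\mathbb{Q}(\sqrt{d})$. (Under the hypotheses, $\varepsilon_{\eta qrs}$ and $\varepsilon_{\rho qrs}$ have norm $1$ and integer coordinates.) *)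

theory Defs
  imports "HOL-Number_Theory.Number_Theory" Complex_Main
begin

definition kdelta :: "nat \<Rightarrow> nat \<Rightarrow> nat" where
  "kdelta a b = (if a = b then 1 else 0)"

text \<open>Integral basis generator of the ring of integers of Q(sqrt d), d squarefree.\<close>
definition quad_omega :: "int \<Rightarrow> real" where
  "quad_omega d = (if d mod 4 = 1 then (1 + sqrt (of_int d)) / 2 else sqrt (of_int d))"

definition quad_integer :: "int \<Rightarrow> real \<Rightarrow> bool" where
  "quad_integer d u \<longleftrightarrow> (\<exists>a b :: int. u = of_int a + of_int b * quad_omega d)"

definition quad_unit :: "int \<Rightarrow> real \<Rightarrow> bool" where
  "quad_unit d u \<longleftrightarrow> quad_integer d u \<and> u \<noteq> 0 \<and> quad_integer d (1 / u)"

definition fund_unit :: "int \<Rightarrow> real" where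
  "fund_unit d = (THE u. quad_unit d u \<and> u > 1 \<and> (\<forall>v. quad_unit d v \<and> v > 1 \<longrightarrow> u \<le> v))"

definition is_nat_square :: "int \<Rightarrow> bool" where
  "is_nat_square z \<longleftrightarrow> (\<exists>n::nat. z = int n ^ 2)"

end

theory Submission
  imports Defs "HOL-Computational_Algebra.Nth_Powers"
begin

text \<open>
  Since \<open>q \<equiv> 3 (mod 4)\<close> divides \<open>d\<close>, the negative Pell equation for
  \<open>d \<in> {qrs, 2qrs}\<close> has no solution, so \<open>\<epsilon>\<^sub>d = x + y\<surd>d\<close> is the least solution of
  \<open>x\<^sup>2 - d y\<^sup>2 = 1\<close>. Factoring \<open>(x + 1)(x - 1) = d y\<^sup>2\<close> over coprime parts gives
  \<open>k(x + 1) = 2 d\<^sub>1 u\<^sup>2\<close>, \<open>k(x - 1) = 2 d\<^sub>2 v\<^sup>2\<close> with \<open>d\<^sub>1 d\<^sub>2 = d\<close>, \<open>k \<in> {1, 2}\<close>, hence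
  \<open>d\<^sub>1 u\<^sup>2 - d\<^sub>2 v\<^sup>2 = k\<close> and \<open>\<surd>(k \<epsilon>) = u\<surd>d\<^sub>1 + v\<surd>d\<^sub>2\<close>. Minimality of \<open>\<epsilon>\<close>
  excludes \<open>d\<^sub>1 = 1\<close> for \<open>k = 1\<close>, and reducing \<open>d\<^sub>1 u\<^sup>2 - d\<^sub>2 v\<^sup>2 = k\<close> modulo \<open>q\<close>, \<open>r\<close>
  and \<open>s\<close> leaves, by the hypotheses on the Legendre symbols, only the factorisations
  corresponding to the listed square roots. Two of the candidate numbers are never
  squares simultaneously, because their product is a prime times a non-zero square.
\<close>

section \<open>Pell's equation\<close>

lemma square_ne_mult_square_if_sqrt_irrational:
  fixes D h k :: int
  assumes "sqrt (of_int D) \<notin> \<rat>" "k \<noteq> 0"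
  shows "h\<^sup>2 \<noteq> D * k\<^sup>2"
proof
  assume "h\<^sup>2 = D * k\<^sup>2"
  then have "(of_int h)\<^sup>2 = (of_int D :: real) * (of_int k)\<^sup>2"
    by (metis of_int_mult of_int_power)
  then have "of_int D = (of_int h / of_int k :: real)\<^sup>2"
    using assms(2) by (simp add: power_divide)
  then have "sqrt (of_int D) = \<bar>of_int h / of_int k\<bar>"
    by simp
  then show False
    using assms(1) by simp
qed

lemma dirichlet_approximation:
  fixes \<theta> :: real and N :: nat
  assumes "N > 0"
  obtains h k :: int where "0 < k" "k \<le> int N" "\<bar>of_int k * \<theta> - of_int h\<bar> < 1 / real N"
proof -
  define f where "f = (\<lambda>k::nat. nat \<lfloor>real N * frac (real k * \<theta>)\<rfloor>)"
  have f_less: "f k < N" for k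
  proof -
    have "real N * frac (real k * \<theta>) < real N"
      using assms frac_lt_1 by simp
    then show ?thesis
      using assms by (simp add: f_def nat_less_iff floor_less_iff)
  qed
  have "\<not> inj_on f {0..N}"
  proof
    assume "inj_on f {0..N}"
    then have "card (f ` {0..N}) = N + 1"
      by (simp add: card_image)
    moreover have "card (f ` {0..N}) \<le> N"
      using card_mono[of "{..<N}" "f ` {0..N}"] f_less by auto
    ultimately show False
      by simp
  qed
  then obtain a b where ab: "a < b" "b \<le> N" "f a = f b"
    by (auto simp: inj_on_def) (metis linorder_neqE_nat)
  define k where "k = int b - int a"
  define h where "h = \<lfloor>real b * \<theta>\<rfloor> - \<lfloor>real a * \<theta>\<rfloor>"
  have "\<lfloor>real N * frac (real a * \<theta>)\<rfloor> = \<lfloor>real N * frac (real b * \<theta>)\<rfloor>"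
    using ab(3) by (simp add: f_def frac_ge_0 eq_nat_nat_iff)
  then have "\<bar>real N * frac (real b * \<theta>) - real N * frac (real a * \<theta>)\<bar> < 1"
    by linarith
  then have "real N * \<bar>frac (real b * \<theta>) - frac (real a * \<theta>)\<bar> < 1"
    by (simp add: right_diff_distrib [symmetric] abs_mult)
  moreover have "of_int k * \<theta> - of_int h = frac (real b * \<theta>) - frac (real a * \<theta>)"
    by (simp add: k_def h_def frac_def algebra_simps)
  ultimately have "real N * \<bar>of_int k * \<theta> - of_int h\<bar> < 1"
    by simp
  then have "\<bar>of_int k * \<theta> - of_int h\<bar> < 1 / real N"
    using assms by (simp add: field_simps)
  moreover have "0 < k" "k \<le> int N"
    using ab by (auto simp: k_def)
  ultimately show thesis
    using that by blast
qed

lemma infinite_good_approximations: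
  fixes \<theta> :: real
  assumes "\<theta> \<notin> \<rat>"
  shows "infinite {(h :: int, k :: int). k > 0 \<and> \<bar>of_int k * \<theta> - of_int h\<bar> < 1 / of_int k}"
    (is "infinite ?S")
proof
  assume fin: "finite ?S"
  define g where "g = (\<lambda>(h :: int, k :: int). \<bar>of_int k * \<theta> - of_int h\<bar>)"
  have g_pos: "g (h, k) > 0" if "k > 0" for h k
  proof -
    have "\<theta> \<noteq> of_int h / of_int k"
      using assms by auto
    then show ?thesis
      using that by (auto simp: g_def field_simps)
  qed
  define \<delta> where "\<delta> = Min (insert 1 (g ` ?S))"
  have "\<delta> > 0"
    unfolding \<delta>_def using fin g_pos by (subst Min_gr_iff) auto
  obtain N :: nat where N: "1 / \<delta> < real N"
    using reals_Archimedean2 by blast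
  moreover have "0 < 1 / \<delta>"
    using \<open>\<delta> > 0\<close> by simp
  ultimately have "N > 0"
    by linarith
  with N \<open>\<delta> > 0\<close> have "1 / real N < \<delta>"
    by (simp add: field_simps)
  obtain h k where hk: "0 < k" "k \<le> int N" "\<bar>of_int k * \<theta> - of_int h\<bar> < 1 / real N"
    using dirichlet_approximation[OF \<open>N > 0\<close>] by blast
  moreover from hk have "1 / real N \<le> 1 / of_int k"
    by (simp add: frac_le)
  ultimately have "(h, k) \<in> ?S"
    by (auto simp: g_def)
  then have "\<delta> \<le> g (h, k)"
    unfolding \<delta>_def using fin by (intro Min_le) auto
  with hk(3) \<open>1 / real N < \<delta>\<close> show False
    by (simp add: g_def)
qed

lemma pell_norm_bound:
  fixes \<theta> :: real and h k :: int
  assumes "\<theta> \<ge> 0" "k > 0" "\<bar>of_int k * \<theta> - of_int h\<bar> < 1 / of_int k"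
  shows "\<bar>(of_int h)\<^sup>2 - \<theta>\<^sup>2 * (of_int k)\<^sup>2\<bar> < 2 * \<theta> + 1"
proof -
  define \<delta> where "\<delta> = of_int h - of_int k * \<theta>"
  have \<delta>: "\<bar>\<delta>\<bar> < 1 / of_int k"
    using assms(3) by (simp add: \<delta>_def abs_minus_commute)
  have k1: "1 / real_of_int k \<le> 1"
    using assms(2) by simp
  have "\<bar>(of_int h)\<^sup>2 - \<theta>\<^sup>2 * (of_int k)\<^sup>2\<bar> = \<bar>\<delta>\<bar> * \<bar>\<delta> + 2 * of_int k * \<theta>\<bar>"
    by (simp add: \<delta>_def abs_mult [symmetric] algebra_simps power2_eq_square)
  also have "\<dots> \<le> \<bar>\<delta>\<bar> * (\<bar>\<delta>\<bar> + 2 * of_int k * \<theta>)"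
    using assms(1,2) by (intro mult_left_mono) (auto simp: abs_triangle_ineq [THEN order_trans])
  also have "\<dots> < 1 / of_int k * (1 / of_int k + 2 * of_int k * \<theta>)"
    using \<delta> assms(1,2) by (intro mult_strict_mono add_strict_right_mono) auto
  also have "\<dots> = (1 / of_int k)\<^sup>2 + 2 * \<theta>"
    using assms(2) by (simp add: field_simps power2_eq_square)
  also have "\<dots> \<le> 1 + 2 * \<theta>"
    using k1 assms(2) by (simp add: power_le_one)
  finally show ?thesis by simp
qed

lemma brahmagupta_identity:
  fixes D a b c d :: "'a :: comm_ring_1"
  shows "(a\<^sup>2 - D * b\<^sup>2) * (c\<^sup>2 - D * d\<^sup>2) = (a * c - D * b * d)\<^sup>2 - D * (a * d - c * b)\<^sup>2"
  by (simp add: power2_eq_square algebra_simps)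

lemma pell_solution_of_congruent_pair:
  fixes D M h1 k1 h2 k2 :: int
  assumes "M \<noteq> 0" "h1\<^sup>2 - D * k1\<^sup>2 = M" "h2\<^sup>2 - D * k2\<^sup>2 = M"
    and "[h1 = h2] (mod M)" "[k1 = k2] (mod M)" "k1 > 0" "k2 > 0" "(h1, k1) \<noteq> (h2, k2)"
  obtains x y where "x\<^sup>2 - D * y\<^sup>2 = 1" "y \<noteq> 0"
proof -
  \<comment> \<open>\<open>X + Y\<surd>D = (h\<^sub>1 + k\<^sub>1\<surd>D)(h\<^sub>2 - k\<^sub>2\<surd>D)\<close> has norm \<open>M\<^sup>2\<close> and is divisible by \<open>M\<close>.\<close>
  define X where "X = h1 * h2 - D * k1 * k2"
  define Y where "Y = h1 * k2 - h2 * k1"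
  have "[X = h1 * h1 - D * k1 * k1] (mod M)"
    unfolding X_def using assms(4,5) by (intro cong_diff cong_mult cong_refl) (auto simp: cong_sym)
  then have "M dvd X"
    using assms(2) cong_dvd_iff[of X M M] by (simp add: power2_eq_square mult.assoc)
  then obtain x where x: "X = M * x" ..
  have "[Y = h1 * k1 - h1 * k1] (mod M)"
    unfolding Y_def using assms(4,5) by (intro cong_diff cong_mult cong_refl) (auto simp: cong_sym)
  then have "M dvd Y"
    by (simp add: cong_0_iff)
  then obtain y where y: "Y = M * y" ..
  have "(M * x)\<^sup>2 - D * (M * y)\<^sup>2 = M * M"
    using brahmagupta_identity[of h1 D k1 h2 k2] assms(2,3) x y by (simp add: X_def Y_def)
  moreover have "M\<^sup>2 * (x\<^sup>2 - D * y\<^sup>2) = (M * x)\<^sup>2 - D * (M * y)\<^sup>2"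
    by (simp add: power_mult_distrib algebra_simps)
  ultimately have "M\<^sup>2 * (x\<^sup>2 - D * y\<^sup>2) = M\<^sup>2 * 1"
    by (simp add: power2_eq_square)
  then have "x\<^sup>2 - D * y\<^sup>2 = 1"
    using assms(1) by simp
  moreover have "y \<noteq> 0"
  proof
    assume "y = 0"
    then have hk: "h1 * k2 = h2 * k1"
      using y by (simp add: Y_def)
    have "M * k2\<^sup>2 = (h1 * k2)\<^sup>2 - D * k1\<^sup>2 * k2\<^sup>2"
      by (simp add: assms(2)[symmetric] power_mult_distrib left_diff_distrib)
    also have "\<dots> = (h2\<^sup>2 - D * k2\<^sup>2) * k1\<^sup>2"
      using hk by (simp add: power_mult_distrib left_diff_distrib)
    finally have "M * k2\<^sup>2 = M * k1\<^sup>2"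
      using assms(3) by simp
    then have "k1 = k2"
      using assms(1,6,7) by (simp add: power2_eq_iff)
    then show False
      using hk assms(6,8) by simp
  qed
  ultimately show thesis ..
qed

lemma infinitely_many_of_some_norm:
  fixes D :: int
  assumes "D > 0" and irrational: "sqrt (of_int D) \<notin> \<rat>"
  obtains M where "M \<noteq> 0" "infinite {(h, k). k > 0 \<and> h\<^sup>2 - D * k\<^sup>2 = M}"
proof -
  let ?\<theta> = "sqrt (of_int D)"
  define S where "S = {(h :: int, k :: int). k > 0 \<and> \<bar>of_int k * ?\<theta> - of_int h\<bar> < 1 / of_int k}"
  define N where "N = (\<lambda>(h, k). h\<^sup>2 - D * k\<^sup>2)"
  define B where "B = \<lceil>2 * ?\<theta> + 1\<rceil>"
  have N: "N hk \<noteq> 0" "N hk \<in> {-B..B}" if "hk \<in> S" for hk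
  proof -
    obtain h k where hk: "hk = (h, k)" "k > 0" "\<bar>of_int k * ?\<theta> - of_int h\<bar> < 1 / of_int k"
      using \<open>hk \<in> S\<close> unfolding S_def by blast
    then have "\<bar>of_int (N hk)\<bar> < 2 * ?\<theta> + 1"
      using pell_norm_bound[of ?\<theta> k h] assms(1) by (simp add: N_def)
    then show "N hk \<in> {-B..B}"
      unfolding B_def by auto linarith+
    show "N hk \<noteq> 0"
      using square_ne_mult_square_if_sqrt_irrational[OF irrational] hk by (simp add: N_def)
  qed
  have "infinite S"
    unfolding S_def using irrational by (rule infinite_good_approximations)
  moreover have "finite (N ` S)"
    using N by (blast intro: finite_subset [of _ "{-B..B}"])
  ultimately obtain hk where hk: "hk \<in> S" "infinite {hk' \<in> S. N hk' = N hk}"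
    using pigeonhole_infinite by blast
  moreover have "{hk' \<in> S. N hk' = N hk} \<subseteq> {(h, k). k > 0 \<and> h\<^sup>2 - D * k\<^sup>2 = N hk}"
    by (auto simp: S_def N_def)
  ultimately show thesis
    using that[of "N hk"] N(1) finite_subset by blast
qed

lemma pell_exists:
  fixes D :: int
  assumes "D > 0" and irrational: "sqrt (of_int D) \<notin> \<rat>"
  obtains x y where "x > 0" "y > 0" "x\<^sup>2 - D * y\<^sup>2 = 1"
proof -
  obtain M where "M \<noteq> 0" and T: "infinite {(h, k). k > 0 \<and> h\<^sup>2 - D * k\<^sup>2 = M}"
    using infinitely_many_of_some_norm[OF assms] .
  define \<phi> where "\<phi> = (\<lambda>(h, k). (h mod M, k mod M))"
  have "a mod M \<in> {-\<bar>M\<bar>..\<bar>M\<bar>}" for a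
    using abs_mod_less[OF \<open>M \<noteq> 0\<close>, of a] by (auto simp: abs_less_iff)
  then have "\<phi> ` UNIV \<subseteq> {-\<bar>M\<bar>..\<bar>M\<bar>} \<times> {-\<bar>M\<bar>..\<bar>M\<bar>}"
    by (auto simp: \<phi>_def)
  then have "finite (\<phi> ` {(h, k). k > 0 \<and> h\<^sup>2 - D * k\<^sup>2 = M})"
    by (meson finite_SigmaI finite_atLeastAtMost_int finite_subset image_mono subset_UNIV)
  with T obtain hk where U: "infinite {hk' \<in> {(h, k). k > 0 \<and> h\<^sup>2 - D * k\<^sup>2 = M}. \<phi> hk' = \<phi> hk}"
    using pigeonhole_infinite by blast
  then obtain h1 k1 where 1: "k1 > 0" "h1\<^sup>2 - D * k1\<^sup>2 = M" "\<phi> (h1, k1) = \<phi> hk"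
    using infinite_imp_nonempty by blast
  from U have "infinite ({hk' \<in> {(h, k). k > 0 \<and> h\<^sup>2 - D * k\<^sup>2 = M}. \<phi> hk' = \<phi> hk} - {(h1, k1)})"
    by simp
  then obtain h2 k2 where 2: "k2 > 0" "h2\<^sup>2 - D * k2\<^sup>2 = M" "\<phi> (h2, k2) = \<phi> hk" "(h1, k1) \<noteq> (h2, k2)"
    using infinite_imp_nonempty by blast
  from 1(3) 2(3) have "\<phi> (h1, k1) = \<phi> (h2, k2)"
    by simp
  then have "[h1 = h2] (mod M)" "[k1 = k2] (mod M)"
    by (simp_all add: \<phi>_def Cong.cong_def)
  with \<open>M \<noteq> 0\<close> 1(1,2) 2(1,2,4) obtain x y where xy: "x\<^sup>2 - D * y\<^sup>2 = 1" "y \<noteq> 0"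
    using pell_solution_of_congruent_pair by metis
  have "D * y\<^sup>2 > 0"
    using assms(1) xy(2) by simp
  then have "x \<noteq> 0"
    using xy(1) by auto
  with xy show thesis
    using that[of "\<bar>x\<bar>" "\<bar>y\<bar>"] by simp
qed

section \<open>Splitting a solution of Pell's equation\<close>

definition factor_pairs :: "int \<Rightarrow> (int \<times> int) set" where
  "factor_pairs n = {(a, b). a > 0 \<and> a * b = n}"

lemma factor_pairs_1: "factor_pairs 1 = {(1, 1)}"
  by (auto simp: factor_pairs_def pos_zmult_eq_1_iff)

lemma factor_pairs_prime_mult:
  fixes p :: int
  assumes "prime p"
  shows "factor_pairs (p * m) = (\<lambda>(a, b). (p * a, b)) ` factor_pairs m \<union> (\<lambda>(a, b). (a, p * b)) ` factor_pairs m"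
proof -
  have p: "p > 0"
    using assms prime_gt_0_int by blast
  have "(a, b) \<in> (\<lambda>(a, b). (p * a, b)) ` factor_pairs m \<union> (\<lambda>(a, b). (a, p * b)) ` factor_pairs m"
    if "a > 0" "a * b = p * m" for a b
  proof -
    from that have "p dvd a * b"
      by simp
    then consider a' where "a = p * a'" | b' where "b = p * b'"
      using assms prime_dvd_mult_iff by (metis dvdE)
    then show ?thesis
    proof cases
      case 1
      with that p have "(a', b) \<in> factor_pairs m"
        by (auto simp: factor_pairs_def zero_less_mult_iff mult.assoc)
      with 1 show ?thesis by force
    next
      case 2
      with that p have "(a, b') \<in> factor_pairs m"
        by (auto simp: factor_pairs_def mult.left_commute)
      with 2 show ?thesis by force
    qed
  qed
  then show ?thesis
    using p by (auto simp: factor_pairs_def mult.left_commute)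
qed

lemma factor_pairs_three_primes:
  fixes a b c :: int
  assumes "prime a" "prime b" "prime c" "(d1, d2) \<in> factor_pairs (a * b * c)"
  shows "(d1, d2) \<in> {(1, a * (b * c)), (a, b * c), (b, a * c), (c, a * b),
    (a * b, c), (a * c, b), (b * c, a), (a * (b * c), 1)}"
proof -
  have "(d1, d2) \<in> factor_pairs (a * (b * (c * 1)))"
    using assms(4) by (simp add: mult.assoc)
  then show ?thesis
    unfolding factor_pairs_prime_mult[OF assms(1)] factor_pairs_prime_mult[OF assms(2)]
      factor_pairs_prime_mult[OF assms(3)] factor_pairs_1
    by auto
qed

lemma coprime_mult_eq_square_imp_square:
  fixes a b w :: int
  assumes "coprime a b" "a > 0" "b > 0" "a * b = w\<^sup>2"
  obtains u where "u > 0" "a = u\<^sup>2"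
proof -
  have "coprime (nat a) (nat b)"
    using assms(1-3) by (simp add: coprime_int_iff [symmetric])
  moreover have "nat a * nat b = (nat \<bar>w\<bar>)\<^sup>2"
    using assms(2-4) by (simp add: nat_mult_distrib [symmetric] nat_power_eq [symmetric])
  ultimately have "is_nth_power 2 (nat a)"
    using is_nth_power_mult_coprime_natD(1) assms(2,3) by (metis is_nth_power_nth_power nat_0_less_mult_iff zero_less_nat_eq)
  then obtain u where "nat a = u\<^sup>2"
    by (auto elim: is_nth_powerE)
  then have "a = (int u)\<^sup>2"
    using assms(2) by (metis int_nat_eq less_le of_nat_power)
  with assms(2) that[of "int u"] show thesis
    by (simp add: zero_less_power2 flip: of_nat_0_less_iff)
qed

lemma coprime_mult_eq_times_square:
  fixes a b w D :: int
  assumes "coprime a b" "a > 0" "b > 0" "w > 0" "a * b = D * w\<^sup>2"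
  obtains d1 d2 u v where "(d1, d2) \<in> factor_pairs D" "u > 0" "v > 0" "a = d1 * u\<^sup>2" "b = d2 * v\<^sup>2" "w = u * v"
proof -
  define d1 where "d1 = gcd a D"
  have "0 < D * w\<^sup>2"
    using assms(2,3,5) by (metis mult_pos_pos)
  then have "D > 0"
    using assms(4) by (simp add: zero_less_mult_iff)
  then have d1: "d1 > 0"
    by (simp add: d1_def)
  obtain a' where a': "a = d1 * a'"
    unfolding d1_def by (meson gcd_dvd1 dvdE)
  obtain d2 where d2: "D = d1 * d2"
    unfolding d1_def by (meson gcd_dvd2 dvdE)
  have "d1 = gcd (d1 * a') (d1 * d2)"
    by (simp only: flip: a' d2) (rule d1_def)
  then have "gcd a' d2 = 1"
    using d1 by (simp add: gcd_mult_left)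
  then have "coprime a' d2"
    by (simp add: coprime_iff_gcd_eq_1)
  moreover have "a' * b = d2 * w\<^sup>2"
    using assms(5) a' d2 d1 by (simp add: mult.assoc)
  ultimately have "d2 dvd b"
    by (metis coprime_commute coprime_dvd_mult_right_iff dvd_triv_left)
  then obtain b' where b': "b = d2 * b'" ..
  have pos: "a' > 0" "d2 > 0" "b' > 0"
    using assms(2,3) \<open>D > 0\<close> a' d2 b' d1 by (auto simp: zero_less_mult_iff)
  have "a' * b' = w\<^sup>2"
    using \<open>a' * b = d2 * w\<^sup>2\<close> b' pos by (simp add: mult.left_commute)
  moreover have "coprime a' b'"
    using assms(1) a' b' by simp
  ultimately obtain u v where "u > 0" "a' = u\<^sup>2" "v > 0" "b' = v\<^sup>2"
    using coprime_mult_eq_square_imp_square pos by (metis coprime_commute mult.commute)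
  moreover from this have "w = u * v"
    using \<open>a' * b' = w\<^sup>2\<close> assms(4) by (simp add: power_mult_distrib [symmetric] power2_eq_iff_nonneg)
  ultimately show thesis
    using that[of d1 d2 u v] d1 d2 a' b' by (simp add: factor_pairs_def)
qed

lemma pell_solution_split_even:
  fixes D x y :: int
  assumes "x\<^sup>2 - D * y\<^sup>2 = 1" "x > 0" "y > 0" "even x"
  obtains d1 d2 u v where "(d1, d2) \<in> factor_pairs D" "u > 0" "v > 0"
    "x + 1 = d1 * u\<^sup>2" "x - 1 = d2 * v\<^sup>2" "y = u * v"
proof -
  have "coprime (x + 1) (x - 1)"
  proof (rule coprimeI)
    fix c assume "c dvd x + 1" "c dvd x - 1"
    then have "c dvd 2"
      using dvd_diff[of c "x + 1" "x - 1"] by simp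
    moreover have "coprime 2 (x + 1)"
      using assms(4) by simp
    ultimately show "is_unit c"
      using \<open>c dvd x + 1\<close> coprime_common_divisor by blast
  qed
  moreover have "(x + 1) * (x - 1) = D * y\<^sup>2"
    using assms(1) by (simp add: algebra_simps power2_eq_square)
  moreover have "x + 1 > 0" "x - 1 > 0"
    using assms(2,4) by (auto simp: le_less)
  ultimately show thesis
    using coprime_mult_eq_times_square assms(3) that by metis
qed

lemma pell_solution_split_odd:
  fixes D x y :: int
  assumes "x\<^sup>2 - D * y\<^sup>2 = 1" "x > 0" "y > 0" "D > 0" "\<not> 4 dvd D" "odd x"
  obtains d1 d2 u v where "(d1, d2) \<in> factor_pairs D" "u > 0" "v > 0"
    "x + 1 = 2 * d1 * u\<^sup>2" "x - 1 = 2 * d2 * v\<^sup>2" "y = 2 * u * v"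
proof -
  obtain m where m: "x = 2 * m + 1"
    using assms(6) oddE by blast
  have prod4: "4 * ((m + 1) * m) = D * y\<^sup>2"
    using assms(1) m by (simp add: algebra_simps power2_eq_square)
  have "even y"
  proof (rule ccontr)
    assume "odd y"
    then obtain t where "y = 2 * t + 1"
      using oddE by blast
    then have "D * y\<^sup>2 = 4 * (D * (t\<^sup>2 + t)) + D"
      by (simp add: algebra_simps power2_eq_square)
    with prod4 assms(5) show False
      by (metis dvd_add_right_iff dvd_triv_left)
  qed
  then obtain w where w: "y = 2 * w" ..
  with prod4 have prod: "(m + 1) * m = D * w\<^sup>2"
    by (simp add: power_mult_distrib)
  have "w > 0"
    using w assms(3) by simp
  with prod assms(4) have "(m + 1) * m > 0"
    by simp
  then have "m > 0" "m + 1 > 0"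
    using m assms(2) by (auto simp: zero_less_mult_iff)
  moreover have "coprime (m + 1) m"
  proof (rule coprimeI)
    fix c assume "c dvd m + 1" "c dvd m"
    then have "c dvd (m + 1) - m"
      by (rule dvd_diff)
    then show "is_unit c"
      by simp
  qed
  ultimately obtain d1 d2 u v where "(d1, d2) \<in> factor_pairs D" "u > 0" "v > 0"
    "m + 1 = d1 * u\<^sup>2" "m = d2 * v\<^sup>2" "w = u * v"
    using coprime_mult_eq_times_square \<open>w > 0\<close> prod by metis
  then show thesis
    using that[of d1 d2 u v] m w by simp
qed

text \<open>
  The parameter \<open>k\<close> records the parity of \<open>x\<close>: \<open>k = 2\<close> if \<open>x\<close> is even and \<open>k = 1\<close>
  if \<open>x\<close> is odd. In both cases \<open>k (x + y\<surd>D) = (u\<surd>d\<^sub>1 + v\<surd>d\<^sub>2)\<^sup>2\<close>.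
\<close>

lemma pell_solution_split:
  fixes D x y :: int
  assumes "x\<^sup>2 - D * y\<^sup>2 = 1" "x > 0" "y > 0" "D > 0" "\<not> 4 dvd D"
  obtains k d1 d2 u v where "k = 1 \<or> k = 2 \<and> odd D" "(d1, d2) \<in> factor_pairs D" "u > 0" "v > 0"
    "d1 * u\<^sup>2 - d2 * v\<^sup>2 = k"
    "k * (x + 1) = 2 * d1 * u\<^sup>2" "k * (x - 1) = 2 * d2 * v\<^sup>2" "k * y = 2 * u * v"
proof (cases "even x")
  case True
  obtain d1 d2 u v where split: "(d1, d2) \<in> factor_pairs D" "u > 0" "v > 0"
    "x + 1 = d1 * u\<^sup>2" "x - 1 = d2 * v\<^sup>2" "y = u * v"
    using pell_solution_split_even[OF assms(1-3) True] .
  have "odd ((x + 1) * (x - 1))"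
    using True by simp
  moreover have "(x + 1) * (x - 1) = D * y\<^sup>2"
    using assms(1) by (simp add: algebra_simps power2_eq_square)
  ultimately have "odd D"
    by simp
  show thesis
    by (rule that[of 2 d1 d2 u v]) (use split \<open>odd D\<close> in \<open>simp_all add: algebra_simps\<close>)
next
  case False
  obtain d1 d2 u v where split: "(d1, d2) \<in> factor_pairs D" "u > 0" "v > 0"
    "x + 1 = 2 * d1 * u\<^sup>2" "x - 1 = 2 * d2 * v\<^sup>2" "y = 2 * u * v"
    using pell_solution_split_odd[OF assms False] .
  show thesis
    by (rule that[of 1 d1 d2 u v]) (use split in \<open>simp_all add: algebra_simps\<close>)
qed

lemma sqrt_eq_add_sqrt:
  fixes a b c x y P Q D \<epsilon> :: real
  assumes "\<epsilon> = x + y * sqrt D" "P * Q = D" "a \<ge> 0" "b \<ge> 0" "P \<ge> 0" "Q \<ge> 0"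
    "c * x = a\<^sup>2 * P + b\<^sup>2 * Q" "c * y = 2 * a * b"
  shows "sqrt (c * \<epsilon>) = a * sqrt P + b * sqrt Q"
proof (rule real_sqrt_unique)
  have "(a * sqrt P + b * sqrt Q)\<^sup>2 = a\<^sup>2 * P + b\<^sup>2 * Q + 2 * a * b * sqrt (P * Q)"
    using assms(5,6) by (simp add: power2_eq_square algebra_simps real_sqrt_mult)
  also have "\<dots> = c * \<epsilon>"
    unfolding assms(1,2) assms(7,8) [symmetric] by (simp add: algebra_simps)
  finally show "(a * sqrt P + b * sqrt Q)\<^sup>2 = c * \<epsilon>" .
  show "0 \<le> a * sqrt P + b * sqrt Q"
    using assms(3-6) by simp
qed

section \<open>The fundamental unit\<close>

text \<open>
  Under these hypotheses \<open>quad_omega D = \<surd>D\<close> and every unit has norm \<open>1\<close>, so the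
  fundamental unit is the least solution of \<open>x\<^sup>2 - D y\<^sup>2 = 1\<close> with \<open>x, y > 0\<close>.
\<close>

locale no_negative_pell =
  fixes D :: int
  assumes pos: "D > 0"
    and not_1_mod_4: "D mod 4 \<noteq> 1"
    and sqrt_irrational: "sqrt (of_int D) \<notin> \<rat>"
    and no_negative_solution: "a\<^sup>2 - D * b\<^sup>2 \<noteq> -1"
begin

abbreviation "\<omega> \<equiv> sqrt (of_int D)"

lemma sqrt_pos: "\<omega> > 0"
  using pos by simp

lemma quad_omega_eq: "quad_omega D = \<omega>"
  using not_1_mod_4 by (simp add: quad_omega_def)

lemma coords_unique:
  assumes "of_int a + of_int b * \<omega> = of_int a' + of_int b' * \<omega>"
  shows "a = a' \<and> b = b'"
proof (cases "b = b'")
  case False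
  then have "\<omega> = of_int (a' - a) / of_int (b - b')"
    using assms by (simp add: field_simps)
  then show ?thesis
    using sqrt_irrational by simp
qed (use assms in simp)

lemma sqrt_mult_self: "\<omega> * \<omega> = of_int D"
  using pos by simp

lemma norm_eq: "(of_int a + of_int b * \<omega>) * (of_int a - of_int b * \<omega>) = of_int (a\<^sup>2 - D * b\<^sup>2)"
  using pos by (simp add: algebra_simps power2_eq_square flip: power2_eq_square)

lemma quad_unit_of_pell:
  assumes "a\<^sup>2 - D * b\<^sup>2 = 1"
  shows "quad_unit D (of_int a + of_int b * \<omega>)"
proof -
  have prod: "(of_int a + of_int b * \<omega>) * (of_int a + of_int (- b) * \<omega>) = 1"
    using norm_eq[of a b] assms by simp
  then have "1 / (of_int a + of_int b * \<omega>) = of_int a + of_int (- b) * \<omega>"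
    using inverse_unique[OF prod] by (simp add: inverse_eq_divide)
  moreover have "of_int a + of_int b * \<omega> \<noteq> 0"
    using prod by auto
  ultimately show ?thesis
    unfolding quad_unit_def quad_integer_def quad_omega_eq by blast
qed

lemma pell_of_quad_unit:
  assumes "quad_unit D v" "v > 1"
  obtains a b where "v = of_int a + of_int b * \<omega>" "a > 0" "b > 0" "a\<^sup>2 - D * b\<^sup>2 = 1"
proof -
  obtain a b a' b' where v: "v = of_int a + of_int b * \<omega>" and v': "1 / v = of_int a' + of_int b' * \<omega>"
    using assms(1) unfolding quad_unit_def quad_integer_def quad_omega_eq by blast
  have "of_int 1 + of_int 0 * \<omega> = v * (1 / v)"
    using assms(2) by simp
  also have "\<dots> = of_int (a * a' + D * b * b') + of_int (a * b' + a' * b) * \<omega>"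
    unfolding v' unfolding v using pos by (simp add: algebra_simps sqrt_mult_self)
  finally have "1 = a * a' + D * b * b' \<and> 0 = a * b' + a' * b"
    by (rule coords_unique)
  moreover have "(a\<^sup>2 - D * b\<^sup>2) * (a'\<^sup>2 - D * b'\<^sup>2) = (a * a' + D * b * b')\<^sup>2 - D * (a * b' + a' * b)\<^sup>2"
    by (simp add: power2_eq_square algebra_simps)
  ultimately have "(a\<^sup>2 - D * b\<^sup>2) * (a'\<^sup>2 - D * b'\<^sup>2) = 1"
    by simp
  then have norm: "a\<^sup>2 - D * b\<^sup>2 = 1"
    using no_negative_solution zmult_eq_1_iff by blast
  then have "of_int a - of_int b * \<omega> = 1 / v"
    using norm_eq[of a b] v assms(2) by (simp add: field_simps)
  moreover have "0 < 1 / v" "1 / v < 1"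
    using assms(2) by auto
  ultimately have "of_int a > (0::real)" "of_int b * \<omega> > 0"
    using v assms(2) by linarith+
  then have "a > 0" "b > 0"
    using sqrt_pos by (simp_all add: zero_less_mult_iff)
  with v norm show thesis
    using that by blast
qed

lemma fund_unit_least_solution:
  obtains a b where "fund_unit D = of_int a + of_int b * \<omega>" "a > 0" "b > 0" "a\<^sup>2 - D * b\<^sup>2 = 1"
    "\<And>m n. m > 0 \<Longrightarrow> n > 0 \<Longrightarrow> m\<^sup>2 - D * n\<^sup>2 = 1 \<Longrightarrow> fund_unit D \<le> of_int m + of_int n * \<omega>"
proof -
  define P where "P = (\<lambda>n::nat. n > 0 \<and> (\<exists>a > 0. a\<^sup>2 - D * (int n)\<^sup>2 = 1))"
  obtain x y where "x > 0" "y > 0" "x\<^sup>2 - D * y\<^sup>2 = 1"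
    using pell_exists pos sqrt_irrational by blast
  then have "P (nat y)"
    by (auto simp: P_def)
  then have "P (LEAST n. P n)"
    by (rule LeastI)
  then obtain a b where ab: "b = int (LEAST n. P n)" "b > 0" "a > 0" "a\<^sup>2 - D * b\<^sup>2 = 1"
    unfolding P_def by auto
  define u where "u = of_int a + of_int b * \<omega>"
  have least: "u \<le> of_int m + of_int n * \<omega>" if "m > 0" "n > 0" "m\<^sup>2 - D * n\<^sup>2 = 1" for m n
  proof -
    have "P (nat n)"
      using that by (auto simp: P_def)
    then have "b \<le> n"
      using ab(1) that(2) Least_le[of P "nat n"] by linarith
    then have "D * b\<^sup>2 \<le> D * n\<^sup>2"
      using ab(2) pos by (simp add: power_mono)
    then have "a\<^sup>2 \<le> m\<^sup>2"
      using ab(4) that(3) by linarith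
    then have "a \<le> m"
      using ab(3) that(1) by (simp add: abs_le_square_iff [symmetric])
    with \<open>b \<le> n\<close> show ?thesis
      unfolding u_def using sqrt_pos by (simp add: add_mono mult_right_mono)
  qed
  have "of_int a \<ge> (1::real)" "of_int b * \<omega> > 0"
    using ab(2,3) sqrt_pos by simp_all
  then have "u > 1"
    unfolding u_def by linarith
  have is_fund: "quad_unit D u \<and> u > 1 \<and> (\<forall>v. quad_unit D v \<and> v > 1 \<longrightarrow> u \<le> v)"
    using quad_unit_of_pell[OF ab(4)] \<open>u > 1\<close> least pell_of_quad_unit unfolding u_def by metis
  then have "fund_unit D = u"
    unfolding fund_unit_def by (rule the_equality) (use is_fund in force)
  with ab least show thesis
    using that unfolding u_def by presburger
qed

lemma fund_unit_coords:
  assumes "fund_unit D = of_int x + of_int y * \<omega>"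
  shows "x > 0" "y > 0" "x\<^sup>2 - D * y\<^sup>2 = 1"
    and "\<And>m n. m > 0 \<Longrightarrow> n > 0 \<Longrightarrow> m\<^sup>2 - D * n\<^sup>2 = 1 \<Longrightarrow>
      of_int x + of_int y * \<omega> \<le> of_int m + of_int n * \<omega>"
proof -
  obtain a b where ab: "fund_unit D = of_int a + of_int b * \<omega>" "a > 0" "b > 0" "a\<^sup>2 - D * b\<^sup>2 = 1"
    "\<And>m n. m > 0 \<Longrightarrow> n > 0 \<Longrightarrow> m\<^sup>2 - D * n\<^sup>2 = 1 \<Longrightarrow> fund_unit D \<le> of_int m + of_int n * \<omega>"
    by (rule fund_unit_least_solution) blast
  moreover have "a = x" "b = y"
    using coords_unique[of a b x y] ab(1) assms by simp_all
  ultimately show "x > 0" "y > 0" "x\<^sup>2 - D * y\<^sup>2 = 1"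
    and "\<And>m n. m > 0 \<Longrightarrow> n > 0 \<Longrightarrow> m\<^sup>2 - D * n\<^sup>2 = 1 \<Longrightarrow>
      of_int x + of_int y * \<omega> \<le> of_int m + of_int n * \<omega>"
    using assms by auto
qed

lemma fund_unit_split:
  assumes "\<not> 4 dvd D" "fund_unit D = of_int x + of_int y * \<omega>"
  obtains k d1 d2 u v where "k = 1 \<and> d1 \<noteq> 1 \<or> k = 2 \<and> odd D" "(d1, d2) \<in> factor_pairs D"
    "u > 0" "v > 0" "d1 * u\<^sup>2 - d2 * v\<^sup>2 = k"
    "k * (x + 1) = 2 * d1 * u\<^sup>2" "k * (x - 1) = 2 * d2 * v\<^sup>2" "k * y = 2 * u * v"
proof -
  note xy = fund_unit_coords[OF assms(2)]
  obtain k d1 d2 u v where split: "k = 1 \<or> k = 2 \<and> odd D" "(d1, d2) \<in> factor_pairs D" "u > 0" "v > 0"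
    "d1 * u\<^sup>2 - d2 * v\<^sup>2 = k"
    "k * (x + 1) = 2 * d1 * u\<^sup>2" "k * (x - 1) = 2 * d2 * v\<^sup>2" "k * y = 2 * u * v"
    using pell_solution_split[OF xy(3,1,2) pos assms(1)] by blast
  moreover have "d1 \<noteq> 1" if "k = 1"
  proof
    \<comment> \<open>otherwise the fundamental unit is \<open>t\<^sup>2\<close> for the smaller unit \<open>t = u + v\<surd>D > 1\<close>\<close>
    assume "d1 = 1"
    with split(2,5-8) that have uv: "u\<^sup>2 - D * v\<^sup>2 = 1" "x = u\<^sup>2 + D * v\<^sup>2" "y = 2 * u * v"
      by (auto simp: factor_pairs_def)
    define t where "t = of_int u + of_int v * \<omega>"
    have "of_int u \<ge> (1::real)" "of_int v * \<omega> > 0"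
      using split(3,4) sqrt_pos by simp_all
    then have "t > 1"
      unfolding t_def by linarith
    have "t\<^sup>2 = of_int x + of_int y * \<omega>"
      unfolding t_def uv(2,3) using pos by (simp add: power2_eq_square algebra_simps sqrt_mult_self)
    also have "\<dots> \<le> t"
      unfolding t_def using xy(4) split(3,4) uv(1) by blast
    finally show False
      using \<open>t > 1\<close> by (simp add: power2_eq_square)
  qed
  ultimately show thesis
    using that by blast
qed

end

section \<open>Squares and Legendre symbols\<close>

lemma prime_mult_square_ne_square:
  fixes p m w n :: int
  assumes "prime p" "\<not> p dvd m" "w \<noteq> 0"
  shows "p * m * w\<^sup>2 \<noteq> n\<^sup>2"
proof
  assume eq: "p * m * w\<^sup>2 = n\<^sup>2"
  have "m \<noteq> 0" "n \<noteq> 0"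
    using assms eq by auto
  have "m * w\<^sup>2 \<noteq> 0" "\<not> is_unit p" "p \<noteq> 0"
    using assms \<open>m \<noteq> 0\<close> by (auto simp: prime_elem_not_unit)
  then have "multiplicity p (p * m * w\<^sup>2) = Suc (multiplicity p (m * w\<^sup>2))"
    by (simp add: mult.assoc multiplicity_times_same)
  also have "multiplicity p (m * w\<^sup>2) = multiplicity p (w\<^sup>2)"
    using assms(1,2) by (intro multiplicity_prime_elem_times_other) auto
  also have "\<dots> = 2 * multiplicity p w"
    using assms(1,3) by (intro prime_elem_multiplicity_power_distrib) auto
  finally have "multiplicity p (n\<^sup>2) = Suc (2 * multiplicity p w)"
    by (simp add: eq)
  moreover have "multiplicity p (n\<^sup>2) = 2 * multiplicity p n"
    using assms(1) \<open>n \<noteq> 0\<close> by (intro prime_elem_multiplicity_power_distrib) auto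
  ultimately show False
    by presburger
qed

lemma sqrt_prime_mult_irrational:
  fixes p m :: int
  assumes "prime p" "\<not> p dvd m" "m > 0"
  shows "sqrt (of_int (p * m)) \<notin> \<rat>"
proof
  assume "sqrt (of_int (p * m)) \<in> \<rat>"
  then obtain a b where ab: "sqrt (of_int (p * m)) = of_int a / of_int b" "b > 0"
    by (metis Rats_cases')
  have "p * m > 0"
    using assms prime_gt_0_int by simp
  then have "of_int (p * m) = (of_int a / of_int b :: real)\<^sup>2"
    by (metis ab(1) of_int_0_less_iff less_imp_le real_sqrt_pow2 of_int_0_le_iff)
  then have "p * m * b\<^sup>2 = a\<^sup>2"
    using ab(2) by (simp add: power_divide field_simps flip: of_int_power of_int_mult)
  with prime_mult_square_ne_square[OF assms(1,2)] ab(2) show False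
    by simp
qed

lemma is_nat_square_power2 [simp]: "is_nat_square (t\<^sup>2)"
  unfolding is_nat_square_def by (rule exI [of _ "nat \<bar>t\<bar>"]) simp

lemma is_nat_square_self_mult: "z = c * w\<^sup>2 \<Longrightarrow> is_nat_square (c * z)"
  using is_nat_square_power2[of "c * w"] by (simp add: power2_eq_square algebra_simps)

lemma is_nat_square_mult: "is_nat_square a \<Longrightarrow> is_nat_square b \<Longrightarrow> is_nat_square (a * b)"
  unfolding is_nat_square_def by (metis of_nat_mult power_mult_distrib)

lemma not_both_is_nat_square:
  fixes p m w a b :: int
  assumes "prime p" "\<not> p dvd m" "w \<noteq> 0" "a * b = p * m * w\<^sup>2"
  shows "\<not> (is_nat_square a \<and> is_nat_square b)"
proof
  assume "is_nat_square a \<and> is_nat_square b"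
  then have "is_nat_square (p * m * w\<^sup>2)"
    unfolding assms(4) [symmetric] by (blast intro: is_nat_square_mult)
  with prime_mult_square_ne_square[OF assms(1-3)] show False
    by (auto simp: is_nat_square_def)
qed

lemma not_both_is_nat_square_pell:
  fixes x y D a b p m c :: int
  assumes "x\<^sup>2 - D * y\<^sup>2 = 1" "y \<noteq> 0" "prime p" "\<not> p dvd m" "c \<noteq> 0" "a * b * D = p * m * c\<^sup>2"
  shows "\<not> (is_nat_square (a * (x - 1)) \<and> is_nat_square (b * (x + 1)))"
proof (rule not_both_is_nat_square[OF assms(3,4), of "c * y"])
  have "a * (x - 1) * (b * (x + 1)) = a * b * (x\<^sup>2 - 1)"
    by (simp add: algebra_simps power2_eq_square)
  also have "\<dots> = p * m * (c * y)\<^sup>2"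
    using assms(1,6) by (simp add: power_mult_distrib algebra_simps)
  finally show "a * (x - 1) * (b * (x + 1)) = p * m * (c * y)\<^sup>2" .
qed (use assms(2,5) in simp)

lemma not_both_is_nat_square_common_factor:
  fixes z a b p m c :: int
  assumes "prime p" "\<not> p dvd m" "c \<noteq> 0" "z \<noteq> 0" "a * b = p * m * c\<^sup>2"
  shows "\<not> (is_nat_square (a * z) \<and> is_nat_square (b * z))"
proof (rule not_both_is_nat_square[OF assms(1,2), of "c * z"])
  have "a * z * (b * z) = a * b * z\<^sup>2"
    by (simp add: algebra_simps power2_eq_square)
  then show "a * z * (b * z) = p * m * (c * z)\<^sup>2"
    using assms(5) by (simp add: power_mult_distrib)
qed (use assms(3,4) in simp)

lemma Legendre_eq_if_cong:
  fixes p :: nat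
  assumes "prime p" "2 < p" "[Legendre a (int p) = c] (mod int p)" "c \<in> {-1, 0, 1}"
  shows "Legendre a (int p) = c"
proof -
  have "int p dvd Legendre a (int p) - c"
    using assms(3) by (simp add: cong_iff_dvd_diff)
  moreover have "\<bar>Legendre a (int p) - c\<bar> < int p"
    using assms(2,4) by (auto simp: Legendre_def)
  ultimately show ?thesis
    using dvd_imp_le_int[of "Legendre a (int p) - c" "int p"] by fastforce
qed

lemma Legendre_mult:
  fixes p :: nat
  assumes "prime p" "2 < p"
  shows "Legendre (a * b) (int p) = Legendre a (int p) * Legendre b (int p)"
proof (rule Legendre_eq_if_cong[OF assms])
  let ?k = "(p - 1) div 2"
  have "[Legendre a (int p) * Legendre b (int p) = a ^ ?k * b ^ ?k] (mod int p)"
    using euler_criterion[OF assms] by (blast intro: cong_mult)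
  then show "[Legendre (a * b) (int p) = Legendre a (int p) * Legendre b (int p)] (mod int p)"
    using euler_criterion[OF assms, of "a * b"] by (metis cong_sym cong_trans power_mult_distrib)
  show "Legendre a (int p) * Legendre b (int p) \<in> {-1, 0, 1}"
    by (auto simp: Legendre_def)
qed

lemma Legendre_minus_one:
  fixes p :: nat
  assumes "prime p" "2 < p"
  shows "Legendre (-1) (int p) = (-1) ^ ((p - 1) div 2)"
  using euler_criterion[OF assms, of "-1"] by (rule Legendre_eq_if_cong[OF assms]) (auto simp: minus_one_power_iff)

lemma Legendre_two_5_mod_8:
  fixes p :: nat
  assumes "prime p" "p mod 8 = 5"
  shows "Legendre 2 (int p) = -1"
proof -
  obtain k where k: "p = 8 * k + 5"
    using assms(2) by (metis div_mod_decomp mult.commute)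
  then have "\<not> [2 = 0] (mod int p)"
    by (auto simp: cong_0_iff dest: zdvd_imp_le)
  then have G: "GAUSS p 2"
    unfolding GAUSS_def using assms(1) k by simp
  have h: "(int p - 1) div 2 = 4 * int k + 2"
    using k by simp
  have "GAUSS.C p 2 = (\<lambda>x. x mod int p) ` (\<lambda>x. x * 2) ` {0<..4 * int k + 2}"
    using G h by (simp add: GAUSS.C_def GAUSS.B_def GAUSS.A_def)
  also have "\<dots> = (\<lambda>x. x * 2) ` {0<..4 * int k + 2}"
    unfolding image_image by (rule image_cong) (auto simp: k)
  finally have "GAUSS.E p 2 = (\<lambda>x. x * 2) ` {2 * int k + 2 .. 4 * int k + 2}"
    unfolding GAUSS.E_def[OF G] h by (auto simp: image_iff)
  then have "card (GAUSS.E p 2) = 2 * k + 1"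
    by (simp add: card_image inj_on_def nat_add_distrib nat_mult_distrib)
  then show ?thesis
    using GAUSS.gauss_lemma[OF G] by simp
qed

lemma Legendre_swap_1_mod_4:
  fixes p p' :: nat
  assumes "prime p" "prime p'" "p mod 4 = 1" "2 < p'" "p \<noteq> p'"
  shows "Legendre (int p) (int p') = Legendre (int p') (int p)"
proof -
  have "2 < p"
    using assms(1,3) prime_ge_2_nat[of p] by (cases "p = 2") auto
  moreover have "even ((p - 1) div 2)"
    using assms(3) by presburger
  ultimately have "Legendre (int p) (int p') * Legendre (int p') (int p) = 1"
    using Quadratic_Reciprocity[OF assms(1) _ assms(2,4,5)] by simp
  then show ?thesis
    by (auto simp: Legendre_def split: if_splits)
qed

lemma Legendre_ne_neg_one_if_square_cong:
  "[x\<^sup>2 = a] (mod p) \<Longrightarrow> Legendre a p \<noteq> -1"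
  unfolding Legendre_def QuadRes_def by auto

lemma Legendre_obstruction:
  fixes p :: nat and d1 d2 u v k :: int
  assumes "prime p" "2 < p" "d1 * u\<^sup>2 - d2 * v\<^sup>2 = k"
  shows "int p dvd d1 \<Longrightarrow> Legendre (-1) (int p) * Legendre (k * d2) (int p) \<noteq> -1"
    and "int p dvd d2 \<Longrightarrow> Legendre (k * d1) (int p) \<noteq> -1"
proof -
  assume "int p dvd d1"
  moreover have "(d2 * v)\<^sup>2 - (-1) * (k * d2) = d2 * d1 * u\<^sup>2"
    by (simp add: assms(3) [symmetric] algebra_simps power2_eq_square)
  ultimately have "[(d2 * v)\<^sup>2 = (-1) * (k * d2)] (mod int p)"
    by (simp add: cong_iff_dvd_diff)
  then show "Legendre (-1) (int p) * Legendre (k * d2) (int p) \<noteq> -1"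
    using Legendre_ne_neg_one_if_square_cong Legendre_mult[OF assms(1,2)] by metis
next
  assume "int p dvd d2"
  moreover have "(d1 * u)\<^sup>2 - k * d1 = d1 * d2 * v\<^sup>2"
    by (simp add: assms(3) [symmetric] algebra_simps power2_eq_square)
  ultimately have "[(d1 * u)\<^sup>2 = k * d1] (mod int p)"
    by (simp add: cong_iff_dvd_diff)
  then show "Legendre (k * d1) (int p) \<noteq> -1"
    by (rule Legendre_ne_neg_one_if_square_cong)
qed

lemma no_negative_pellI:
  fixes q :: nat and m :: int
  assumes "prime q" "q mod 4 = 3" "m > 0" "\<not> int q dvd m" "(int q * m) mod 4 \<noteq> 1"
  shows "no_negative_pell (int q * m)"
proof
  show "int q * m > 0"
    using assms(1,3) by (simp add: prime_gt_0_nat)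
  show "sqrt (of_int (int q * m)) \<notin> \<rat>"
    using sqrt_prime_mult_irrational[of "int q" m] assms(1,3,4) by simp
  have "2 < q"
    using assms(1,2) prime_ge_2_nat[of q] by (cases "q = 2") auto
  moreover have "odd ((q - 1) div 2)"
    using assms(2) by presburger
  ultimately have "Legendre (-1) (int q) = -1"
    using Legendre_minus_one[OF assms(1)] by simp
  fix a b :: int
  show "a\<^sup>2 - int q * m * b\<^sup>2 \<noteq> -1"
  proof
    assume "a\<^sup>2 - int q * m * b\<^sup>2 = -1"
    then have "[a\<^sup>2 = -1] (mod int q)"
      by (metis cong_iff_dvd_diff diff_minus_eq_add dvd_triv_left mult.assoc add.commute eq_diff_eq)
    with \<open>Legendre (-1) (int q) = -1\<close> show False
      using Legendre_ne_neg_one_if_square_cong by blast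
  qed
qed (use assms(5) in simp)

section \<open>The primes \<open>q\<close>, \<open>r\<close>, \<open>s\<close>\<close>

text \<open>
  \<open>e\<close> is the common value of \<open>(q/r)\<close> and \<open>(q/s)\<close>; in the theorem \<open>e = 1\<close> for
  \<open>\<eta> = 1\<close> and \<open>e = -1\<close> for \<open>\<eta> = 2\<close>.
\<close>

locale qrs_primes =
  fixes q r s :: nat and e :: int
  assumes prime_q: "prime q" and prime_r: "prime r" and prime_s: "prime s"
    and q_mod_4: "q mod 4 = 3" and r_mod_8: "r mod 8 = 5" and s_mod_8: "s mod 8 = 5"
    and Legendre_q_r: "Legendre (int q) (int r) = e" and Legendre_q_s: "Legendre (int q) (int s) = e"
    and Legendre_r_s: "Legendre (int r) (int s) = 1"
begin

lemma primes_gt_2: "2 < q" "2 < r" "2 < s"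
  using prime_q prime_r prime_s q_mod_4 r_mod_8 s_mod_8 prime_ge_2_nat[of q] prime_ge_2_nat[of r]
    prime_ge_2_nat[of s] by (auto simp: le_less)

lemma r_s_mod_4: "r mod 4 = 1" "s mod 4 = 1"
  using r_mod_8 s_mod_8 by presburger+

lemma primes_distinct: "q \<noteq> r" "q \<noteq> s" "r \<noteq> s"
  using q_mod_4 r_s_mod_4 Legendre_r_s by (auto simp: Legendre_def cong_0_iff)

lemma int_primes: "prime (int q)" "prime (int r)" "prime (int s)" "prime (2 :: int)"
  using prime_q prime_r prime_s by simp_all

lemma primes_not_dvd:
  "\<not> int q dvd int r" "\<not> int q dvd int s" "\<not> int r dvd int q" "\<not> int r dvd int s"
  "\<not> int s dvd int q" "\<not> int s dvd int r" "\<not> int q dvd 2" "\<not> int r dvd 2" "\<not> int s dvd 2"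
  "\<not> int q dvd 1" "\<not> int r dvd 1" "\<not> int s dvd 1"
  using primes_dvd_imp_eq[OF prime_q prime_r] primes_dvd_imp_eq[OF prime_q prime_s]
    primes_dvd_imp_eq[OF prime_r prime_q] primes_dvd_imp_eq[OF prime_r prime_s]
    primes_dvd_imp_eq[OF prime_s prime_q] primes_dvd_imp_eq[OF prime_s prime_r] primes_distinct primes_gt_2
  by (auto dest: zdvd_imp_le)

lemma Legendre_mult_primes:
  "Legendre (a * b) (int q) = Legendre a (int q) * Legendre b (int q)"
  "Legendre (a * b) (int r) = Legendre a (int r) * Legendre b (int r)"
  "Legendre (a * b) (int s) = Legendre a (int s) * Legendre b (int s)"
  using Legendre_mult prime_q prime_r prime_s primes_gt_2 by blast+

lemma Legendre_values:
  "Legendre (-1) (int q) = -1" "Legendre (-1) (int r) = 1" "Legendre (-1) (int s) = 1"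
  "Legendre 1 (int q) = 1" "Legendre 1 (int r) = 1" "Legendre 1 (int s) = 1"
  "Legendre 2 (int r) = -1" "Legendre 2 (int s) = -1"
  "Legendre (int r) (int q) = e" "Legendre (int s) (int q) = e" "Legendre (int s) (int r) = 1"
proof -
  have "odd ((q - 1) div 2)" "even ((r - 1) div 2)" "even ((s - 1) div 2)"
    using q_mod_4 r_s_mod_4 by presburger+
  then show minus_one: "Legendre (-1) (int q) = -1" "Legendre (-1) (int r) = 1" "Legendre (-1) (int s) = 1"
    using Legendre_minus_one prime_q prime_r prime_s primes_gt_2 by simp_all
  show "Legendre 1 (int q) = 1" "Legendre 1 (int r) = 1" "Legendre 1 (int s) = 1"
    using Legendre_mult_primes[of "-1" "-1"] minus_one by simp_all
  show "Legendre 2 (int r) = -1" "Legendre 2 (int s) = -1"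
    using Legendre_two_5_mod_8 prime_r prime_s r_mod_8 s_mod_8 by simp_all
  show "Legendre (int r) (int q) = e" "Legendre (int s) (int q) = e" "Legendre (int s) (int r) = 1"
    using Legendre_swap_1_mod_4 prime_q prime_r prime_s r_s_mod_4 primes_gt_2 primes_distinct
      Legendre_q_r Legendre_q_s Legendre_r_s by metis+
qed

lemmas Legendre_simps = Legendre_values Legendre_mult_primes Legendre_q_r Legendre_q_s Legendre_r_s

lemma Legendre_obstruction_qrs:
  assumes "d1 * u\<^sup>2 - d2 * v\<^sup>2 = k" "p \<in> {q, r, s}"
  shows "int p dvd d1 \<longrightarrow> Legendre (-1) (int p) * Legendre (k * d2) (int p) \<noteq> -1"
    and "int p dvd d2 \<longrightarrow> Legendre (k * d1) (int p) \<noteq> -1"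
  using Legendre_obstruction[OF _ _ assms(1), of p] assms(2) prime_q prime_r prime_s primes_gt_2 by auto

lemma no_negative_pell_mqrs:
  assumes "m \<in> {1, 2}"
  shows "no_negative_pell (int (m * q * r * s))"
proof -
  have "int q mod 4 = 3" "int r mod 4 = 1" "int s mod 4 = 1"
    using q_mod_4 r_s_mod_4 by presburger+
  then have "(int q * (int r * int s)) mod 4 = 3"
    by (simp add: mod_mult_eq [symmetric] mod_mult_left_eq mod_mult_right_eq)
  moreover have "int q * (int m * int r * int s) = int m * (int q * (int r * int s))"
    by (simp add: ac_simps)
  moreover have "(int m * z) mod 4 \<noteq> 1" if "z mod 4 = 3" for z
    using assms that by (auto; presburger)
  ultimately have "(int q * (int m * int r * int s)) mod 4 \<noteq> 1"
    by metis
  moreover have "\<not> int q dvd int m * int r * int s"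
    using assms primes_not_dvd primes_gt_2 by (auto simp: prime_dvd_mult_iff prime_q dest: dvd_imp_le)
  ultimately show ?thesis
    using no_negative_pellI[OF prime_q q_mod_4, of "int m * int r * int s"] assms primes_gt_2
    by (auto simp: ac_simps)
qed

lemma factor_pairs_2qrs:
  assumes "(d1, d2) \<in> factor_pairs (2 * int q * int r * int s)"
  obtains a b where "(a, b) \<in> factor_pairs (int q * int r * int s)" "(d1, d2) = (2 * a, b) \<or> (d1, d2) = (a, 2 * b)"
proof -
  have "(d1, d2) \<in> (\<lambda>(a, b). (2 * a, b)) ` factor_pairs (int q * int r * int s) \<union>
      (\<lambda>(a, b). (a, 2 * b)) ` factor_pairs (int q * int r * int s)"
    using assms factor_pairs_prime_mult[OF int_primes(4), of "int q * int r * int s"] by (simp add: mult.assoc)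
  with that show thesis
    by auto
qed

text \<open>
  The factor pairs \<open>(d\<^sub>1, d\<^sub>2)\<close> left out below are excluded by the Legendre symbol at
  one of \<open>q\<close>, \<open>r\<close>, \<open>s\<close>.
\<close>

lemma split_qrs_residue:
  assumes "e = 1" "(d1, d2) \<in> factor_pairs (int q * int r * int s)" "d1 * u\<^sup>2 - d2 * v\<^sup>2 = k"
    "k = 1 \<and> d1 \<noteq> 1 \<or> k = 2"
  shows "k = 1 \<and> (d1, d2) \<in> {(int r, int q * int s), (int s, int q * int r), (int r * int s, int q)}"
  using factor_pairs_three_primes[OF int_primes(1-3) assms(2)] assms(4)
  by (elim insertE emptyE disjE conjE)
    (use assms(1) Legendre_obstruction_qrs[OF assms(3), of q] Legendre_obstruction_qrs[OF assms(3), of r]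
      Legendre_obstruction_qrs[OF assms(3), of s]
      in \<open>simp_all add: Legendre_simps prime_dvd_mult_iff int_primes primes_not_dvd\<close>)

lemma split_qrs_nonresidue:
  assumes "e = -1" "(d1, d2) \<in> factor_pairs (int q * int r * int s)" "d1 * u\<^sup>2 - d2 * v\<^sup>2 = k"
    "k = 1 \<and> d1 \<noteq> 1 \<or> k = 2"
  shows "k = 2 \<and> (d1, d2) \<in> {(int q, int r * int s), (int r * int s, int q)}"
  using factor_pairs_three_primes[OF int_primes(1-3) assms(2)] assms(4)
  by (elim insertE emptyE disjE conjE)
    (use assms(1) Legendre_obstruction_qrs[OF assms(3), of q] Legendre_obstruction_qrs[OF assms(3), of r]
      Legendre_obstruction_qrs[OF assms(3), of s]
      in \<open>simp_all add: Legendre_simps prime_dvd_mult_iff int_primes primes_not_dvd\<close>)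

lemma split_2qrs_residue:
  assumes "e = 1" "(d1, d2) \<in> factor_pairs (2 * int q * int r * int s)" "d1 * u\<^sup>2 - d2 * v\<^sup>2 = 1"
    "d1 \<noteq> 1"
  shows "(d1, d2) \<in> {(int q, 2 * (int r * int s)), (2 * (int r * int s), int q)}"
proof -
  obtain a b where "(a, b) \<in> factor_pairs (int q * int r * int s)" "(d1, d2) = (2 * a, b) \<or> (d1, d2) = (a, 2 * b)"
    using factor_pairs_2qrs[OF assms(2)] .
  from factor_pairs_three_primes[OF int_primes(1-3) this(1)] this(2) show ?thesis
    by (elim insertE emptyE disjE)
      (use assms(1,4) Legendre_obstruction_qrs[OF assms(3), of q] Legendre_obstruction_qrs[OF assms(3), of r]
        Legendre_obstruction_qrs[OF assms(3), of s]
        in \<open>simp_all add: Legendre_simps prime_dvd_mult_iff int_primes primes_not_dvd\<close>)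
qed

lemma split_2qrs_nonresidue:
  assumes "e = -1" "(d1, d2) \<in> factor_pairs (2 * int q * int r * int s)" "d1 * u\<^sup>2 - d2 * v\<^sup>2 = 1"
    "d1 \<noteq> 1"
  shows "(d1, d2) \<in> {(2 * (int q * int s), int r), (2 * (int q * int r), int s), (int r * int s, 2 * int q)}"
proof -
  obtain a b where "(a, b) \<in> factor_pairs (int q * int r * int s)" "(d1, d2) = (2 * a, b) \<or> (d1, d2) = (a, 2 * b)"
    using factor_pairs_2qrs[OF assms(2)] .
  from factor_pairs_three_primes[OF int_primes(1-3) this(1)] this(2) show ?thesis
    by (elim insertE emptyE disjE)
      (use assms(1,4) Legendre_obstruction_qrs[OF assms(3), of q] Legendre_obstruction_qrs[OF assms(3), of r]
        Legendre_obstruction_qrs[OF assms(3), of s]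
        in \<open>simp_all add: Legendre_simps prime_dvd_mult_iff int_primes primes_not_dvd\<close>)
qed

lemma fund_unit_mqrs_pell:
  assumes "m \<in> {1, 2}" "fund_unit (int (m * q * r * s)) = of_int x + of_int y * sqrt (real (m * q * r * s))"
  shows "x > 1" "y > 0" "x\<^sup>2 - int (m * q * r * s) * y\<^sup>2 = 1"
proof -
  interpret no_negative_pell "int (m * q * r * s)"
    using assms(1) by (rule no_negative_pell_mqrs)
  have "fund_unit (int (m * q * r * s)) = of_int x + of_int y * \<omega>"
    using assms(2) by simp
  note coords = fund_unit_coords[OF this]
  show "y > 0" "x\<^sup>2 - int (m * q * r * s) * y\<^sup>2 = 1"
    using coords(2,3) .
  have "int (m * q * r * s) * y\<^sup>2 > 0"
    using pos coords(2) by simp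
  then have "1 < x\<^sup>2"
    using coords(3) by linarith
  then show "x > 1"
    using power2_less_imp_less[of 1 x] coords(1) by simp
qed

lemma fund_unit_mqrs_split:
  assumes "m \<in> {1, 2}" "fund_unit (int (m * q * r * s)) = of_int x + of_int y * sqrt (real (m * q * r * s))"
  obtains k d1 d2 u v where "k = 1 \<and> d1 \<noteq> 1 \<or> k = 2 \<and> m = 1" "(d1, d2) \<in> factor_pairs (int (m * q * r * s))"
    "u > 0" "v > 0" "d1 * u\<^sup>2 - d2 * v\<^sup>2 = k"
    "k * (x + 1) = 2 * d1 * u\<^sup>2" "k * (x - 1) = 2 * d2 * v\<^sup>2" "k * y = 2 * u * v"
proof -
  interpret no_negative_pell "int (m * q * r * s)"
    using assms(1) by (rule no_negative_pell_mqrs)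
  have "odd (int (q * r * s))"
    using prime_q prime_r prime_s primes_gt_2 by (simp add: prime_odd_nat)
  moreover have "\<not> 4 dvd int m * z" if "odd z" for z :: int
    using assms(1) that by (auto; presburger)
  ultimately have "\<not> 4 dvd int (m * q * r * s)"
    by (metis mult.assoc of_nat_mult)
  moreover have "odd (int (m * q * r * s)) \<Longrightarrow> m = 1"
    using assms(1) by auto
  moreover have "fund_unit (int (m * q * r * s)) = of_int x + of_int y * \<omega>"
    using assms(2) by simp
  ultimately show thesis
    using fund_unit_split that by metis
qed

text \<open>
  The norm equations below are oriented as \<open>\<dots> = k\<close>: used as simplifier premises,
  \<open>2 = \<dots>\<close> would rewrite the numeral \<open>2\<close> and loop.
\<close>

lemma sqrt_fund_unit_qrs_residue:
  assumes "e = 1" and eps: "fund_unit (int (q * r * s)) = of_int x + of_int y * sqrt (real (q * r * s))"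
  obtains (A) \<gamma>1 \<gamma>2 where "is_nat_square (2 * int q * (x - 1))"
      "sqrt (fund_unit (int (q * r * s))) = of_int \<gamma>1 * sqrt (real q) + of_int \<gamma>2 * sqrt (real (r * s))"
      "- int q * \<gamma>1\<^sup>2 + int (r * s) * \<gamma>2\<^sup>2 = 1"
  | (B) \<gamma>1 \<gamma>2 where "is_nat_square (2 * int r * (x + 1))"
      "sqrt (fund_unit (int (q * r * s))) = of_int \<gamma>1 * sqrt (real r) + of_int \<gamma>2 * sqrt (real (q * s))"
      "int r * \<gamma>1\<^sup>2 - int (q * s) * \<gamma>2\<^sup>2 = 1"
  | (C) \<gamma>1 \<gamma>2 where "is_nat_square (2 * int s * (x + 1))"
      "sqrt (fund_unit (int (q * r * s))) = of_int \<gamma>1 * sqrt (real s) + of_int \<gamma>2 * sqrt (real (q * r))"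
      "int s * \<gamma>1\<^sup>2 - int (q * r) * \<gamma>2\<^sup>2 = 1"
proof -
  note sqrt_eq = sqrt_eq_add_sqrt[OF eps, where c = 1, unfolded mult_1_left]
  obtain k d1 d2 u v where split: "k = 1 \<and> d1 \<noteq> 1 \<or> k = 2" "(d1, d2) \<in> factor_pairs (int q * int r * int s)"
    "u > 0" "v > 0" "d1 * u\<^sup>2 - d2 * v\<^sup>2 = k"
    "k * (x + 1) = 2 * d1 * u\<^sup>2" "k * (x - 1) = 2 * d2 * v\<^sup>2" "k * y = 2 * u * v"
    by (rule fund_unit_mqrs_split[of 1 x y]) (use eps in auto)
  then have "k = 1" and "(d1, d2) \<in> {(int r, int q * int s), (int s, int q * int r), (int r * int s, int q)}"
    using split_qrs_residue[OF assms(1) split(2,5)] by auto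
  then show thesis
  proof (elim insertE emptyE)
    assume "(d1, d2) = (int r, int q * int s)"
    with split(5-8) \<open>k = 1\<close> have sq: "x + 1 = 2 * int r * u\<^sup>2" and norm: "int r * u\<^sup>2 - int (q * s) * v\<^sup>2 = 1"
      and xy: "x = u\<^sup>2 * int r + v\<^sup>2 * int (q * s)" "y = 2 * u * v"
      by (auto simp: ac_simps)
    show thesis
      by (rule B[OF is_nat_square_self_mult[OF sq] sqrt_eq norm]) (use xy split(3,4) in \<open>simp_all add: ac_simps\<close>)
  next
    assume "(d1, d2) = (int s, int q * int r)"
    with split(5-8) \<open>k = 1\<close> have sq: "x + 1 = 2 * int s * u\<^sup>2" and norm: "int s * u\<^sup>2 - int (q * r) * v\<^sup>2 = 1"
      and xy: "x = u\<^sup>2 * int s + v\<^sup>2 * int (q * r)" "y = 2 * u * v"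
      by (auto simp: ac_simps)
    show thesis
      by (rule C[OF is_nat_square_self_mult[OF sq] sqrt_eq norm]) (use xy split(3,4) in \<open>simp_all add: ac_simps\<close>)
  next
    assume "(d1, d2) = (int r * int s, int q)"
    with split(5-8) \<open>k = 1\<close> have sq: "x - 1 = 2 * int q * v\<^sup>2" and norm: "- int q * v\<^sup>2 + int (r * s) * u\<^sup>2 = 1"
      and xy: "x = v\<^sup>2 * int q + u\<^sup>2 * int (r * s)" "y = 2 * v * u"
      by (auto simp: ac_simps)
    show thesis
      by (rule A[OF is_nat_square_self_mult[OF sq] sqrt_eq norm]) (use xy split(3,4) in \<open>simp_all add: ac_simps\<close>)
  qed
qed

lemma sqrt_fund_unit_2qrs_nonresidue:
  assumes "e = -1" and eps: "fund_unit (int (2 * q * r * s)) = of_int x + of_int y * sqrt (real (2 * q * r * s))"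
  obtains (A) \<gamma>1 \<gamma>2 where "is_nat_square (int q * (x - 1))"
      "sqrt (2 * fund_unit (int (2 * q * r * s))) = of_int \<gamma>1 * sqrt (real q) + of_int \<gamma>2 * sqrt (real (2 * r * s))"
      "- int q * \<gamma>1\<^sup>2 + int (2 * r * s) * \<gamma>2\<^sup>2 = 2"
  | (B) \<gamma>1 \<gamma>2 where "is_nat_square (2 * int r * (x - 1))"
      "sqrt (2 * fund_unit (int (2 * q * r * s))) = of_int \<gamma>1 * sqrt (real (2 * r)) + of_int \<gamma>2 * sqrt (real (q * s))"
      "- int (2 * r) * \<gamma>1\<^sup>2 + int (q * s) * \<gamma>2\<^sup>2 = 2"
  | (C) \<gamma>1 \<gamma>2 where "is_nat_square (2 * int s * (x - 1))"
      "sqrt (2 * fund_unit (int (2 * q * r * s))) = of_int \<gamma>1 * sqrt (real (2 * s)) + of_int \<gamma>2 * sqrt (real (q * r))"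
      "- int (2 * s) * \<gamma>1\<^sup>2 + int (q * r) * \<gamma>2\<^sup>2 = 2"
proof -
  note sqrt_eq = sqrt_eq_add_sqrt[OF eps]
  obtain k d1 d2 u v where split: "k = 1 \<and> d1 \<noteq> 1" "(d1, d2) \<in> factor_pairs (2 * int q * int r * int s)"
    "u > 0" "v > 0" "d1 * u\<^sup>2 - d2 * v\<^sup>2 = k"
    "k * (x + 1) = 2 * d1 * u\<^sup>2" "k * (x - 1) = 2 * d2 * v\<^sup>2" "k * y = 2 * u * v"
    by (rule fund_unit_mqrs_split[of 2 x y]) (use eps in auto)
  then have "(d1, d2) \<in> {(2 * (int q * int s), int r), (2 * (int q * int r), int s), (int r * int s, 2 * int q)}"
    using split_2qrs_nonresidue[OF assms(1) split(2)] by auto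
  then show thesis
  proof (elim insertE emptyE)
    assume "(d1, d2) = (2 * (int q * int s), int r)"
    with split(1,5-8) have sq: "x - 1 = 2 * int r * v\<^sup>2" and norm: "- int (2 * r) * v\<^sup>2 + int (q * s) * (2 * u)\<^sup>2 = 2"
      and xy: "2 * x = v\<^sup>2 * int (2 * r) + (2 * u)\<^sup>2 * int (q * s)" "2 * y = 2 * v * (2 * u)"
      by (auto simp: ac_simps power_mult_distrib)
    show thesis
      by (rule B[OF is_nat_square_self_mult[OF sq] sqrt_eq norm])
        (use xy[THEN arg_cong[where f = real_of_int]] split(3,4) in \<open>simp_all add: ac_simps\<close>)
  next
    assume "(d1, d2) = (2 * (int q * int r), int s)"
    with split(1,5-8) have sq: "x - 1 = 2 * int s * v\<^sup>2" and norm: "- int (2 * s) * v\<^sup>2 + int (q * r) * (2 * u)\<^sup>2 = 2"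
      and xy: "2 * x = v\<^sup>2 * int (2 * s) + (2 * u)\<^sup>2 * int (q * r)" "2 * y = 2 * v * (2 * u)"
      by (auto simp: ac_simps power_mult_distrib)
    show thesis
      by (rule C[OF is_nat_square_self_mult[OF sq] sqrt_eq norm])
        (use xy[THEN arg_cong[where f = real_of_int]] split(3,4) in \<open>simp_all add: ac_simps\<close>)
  next
    assume "(d1, d2) = (int r * int s, 2 * int q)"
    with split(1,5-8) have sq: "x - 1 = int q * (2 * v)\<^sup>2" and norm: "- int q * (2 * v)\<^sup>2 + int (2 * r * s) * u\<^sup>2 = 2"
      and xy: "2 * x = (2 * v)\<^sup>2 * int q + u\<^sup>2 * int (2 * r * s)" "2 * y = 2 * (2 * v) * u"
      by (auto simp: ac_simps power_mult_distrib)
    show thesis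
      by (rule A[OF is_nat_square_self_mult[OF sq] sqrt_eq norm])
        (use xy[THEN arg_cong[where f = real_of_int]] split(3,4) in \<open>simp_all add: ac_simps\<close>)
  qed
qed

lemma sqrt_fund_unit_2qrs_residue:
  assumes "e = 1" and eps: "fund_unit (int (2 * q * r * s)) = of_int x + of_int y * sqrt (real (2 * q * r * s))"
  obtains (A) y1 y2 where "is_nat_square (2 * int q * (x + 1))"
      "sqrt (2 * fund_unit (int (2 * q * r * s))) = of_int y1 * sqrt (real (2 * q)) + of_int y2 * sqrt (real (r * s))"
      "int (2 * q) * y1\<^sup>2 - int (r * s) * y2\<^sup>2 = 2"
  | (B) y1 y2 where "is_nat_square (2 * int q * (x - 1))"
      "sqrt (2 * fund_unit (int (2 * q * r * s))) = of_int y1 * sqrt (real (2 * q)) + of_int y2 * sqrt (real (r * s))"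
      "- int (2 * q) * y1\<^sup>2 + int (r * s) * y2\<^sup>2 = 2"
proof -
  note sqrt_eq = sqrt_eq_add_sqrt[OF eps]
  obtain k d1 d2 u v where split: "k = 1 \<and> d1 \<noteq> 1" "(d1, d2) \<in> factor_pairs (2 * int q * int r * int s)"
    "u > 0" "v > 0" "d1 * u\<^sup>2 - d2 * v\<^sup>2 = k"
    "k * (x + 1) = 2 * d1 * u\<^sup>2" "k * (x - 1) = 2 * d2 * v\<^sup>2" "k * y = 2 * u * v"
    by (rule fund_unit_mqrs_split[of 2 x y]) (use eps in auto)
  then have "(d1, d2) \<in> {(int q, 2 * (int r * int s)), (2 * (int r * int s), int q)}"
    using split_2qrs_residue[OF assms(1) split(2)] by auto
  then show thesis
  proof (elim insertE emptyE)
    assume "(d1, d2) = (int q, 2 * (int r * int s))"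
    with split(1,5-8) have sq: "x + 1 = 2 * int q * u\<^sup>2" and norm: "int (2 * q) * u\<^sup>2 - int (r * s) * (2 * v)\<^sup>2 = 2"
      and xy: "2 * x = u\<^sup>2 * int (2 * q) + (2 * v)\<^sup>2 * int (r * s)" "2 * y = 2 * u * (2 * v)"
      by (auto simp: ac_simps power_mult_distrib)
    show thesis
      by (rule A[OF is_nat_square_self_mult[OF sq] sqrt_eq norm])
        (use xy[THEN arg_cong[where f = real_of_int]] split(3,4) in \<open>simp_all add: ac_simps\<close>)
  next
    assume "(d1, d2) = (2 * (int r * int s), int q)"
    with split(1,5-8) have sq: "x - 1 = 2 * int q * v\<^sup>2" and norm: "- int (2 * q) * v\<^sup>2 + int (r * s) * (2 * u)\<^sup>2 = 2"
      and xy: "2 * x = v\<^sup>2 * int (2 * q) + (2 * u)\<^sup>2 * int (r * s)" "2 * y = 2 * v * (2 * u)"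
      by (auto simp: ac_simps power_mult_distrib)
    show thesis
      by (rule B[OF is_nat_square_self_mult[OF sq] sqrt_eq norm])
        (use xy[THEN arg_cong[where f = real_of_int]] split(3,4) in \<open>simp_all add: ac_simps\<close>)
  qed
qed

lemma sqrt_fund_unit_qrs_nonresidue:
  assumes "e = -1" and eps: "fund_unit (int (q * r * s)) = of_int x + of_int y * sqrt (real (q * r * s))"
  obtains (A) y1 y2 where "is_nat_square (int q * (x + 1))"
      "sqrt (2 * fund_unit (int (q * r * s))) = of_int y1 * sqrt (real q) + of_int y2 * sqrt (real (r * s))"
      "int q * y1\<^sup>2 - int (r * s) * y2\<^sup>2 = 2"
  | (B) y1 y2 where "is_nat_square (int q * (x - 1))"
      "sqrt (2 * fund_unit (int (q * r * s))) = of_int y1 * sqrt (real q) + of_int y2 * sqrt (real (r * s))"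
      "- int q * y1\<^sup>2 + int (r * s) * y2\<^sup>2 = 2"
proof -
  note sqrt_eq = sqrt_eq_add_sqrt[OF eps]
  obtain k d1 d2 u v where split: "k = 1 \<and> d1 \<noteq> 1 \<or> k = 2" "(d1, d2) \<in> factor_pairs (int q * int r * int s)"
    "u > 0" "v > 0" "d1 * u\<^sup>2 - d2 * v\<^sup>2 = k"
    "k * (x + 1) = 2 * d1 * u\<^sup>2" "k * (x - 1) = 2 * d2 * v\<^sup>2" "k * y = 2 * u * v"
    by (rule fund_unit_mqrs_split[of 1 x y]) (use eps in auto)
  then have "k = 2" and "(d1, d2) \<in> {(int q, int r * int s), (int r * int s, int q)}"
    using split_qrs_nonresidue[OF assms(1) split(2,5)] by auto
  then show thesis
  proof (elim insertE emptyE)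
    assume "(d1, d2) = (int q, int r * int s)"
    with split(5-8) \<open>k = 2\<close> have sq: "x + 1 = int q * u\<^sup>2" and norm: "int q * u\<^sup>2 - int (r * s) * v\<^sup>2 = 2"
      and xy: "2 * x = u\<^sup>2 * int q + v\<^sup>2 * int (r * s)" "2 * y = 2 * u * v"
      by (auto simp: ac_simps)
    show thesis
      by (rule A[OF is_nat_square_self_mult[OF sq] sqrt_eq norm])
        (use xy[THEN arg_cong[where f = real_of_int]] split(3,4) in \<open>simp_all add: ac_simps\<close>)
  next
    assume "(d1, d2) = (int r * int s, int q)"
    with split(5-8) \<open>k = 2\<close> have sq: "x - 1 = int q * v\<^sup>2" and norm: "- int q * v\<^sup>2 + int (r * s) * u\<^sup>2 = 2"
      and xy: "2 * x = v\<^sup>2 * int q + u\<^sup>2 * int (r * s)" "2 * y = 2 * v * u"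
      by (auto simp: ac_simps)
    show thesis
      by (rule B[OF is_nat_square_self_mult[OF sq] sqrt_eq norm])
        (use xy[THEN arg_cong[where f = real_of_int]] split(3,4) in \<open>simp_all add: ac_simps\<close>)
  qed
qed

lemma sqrt_fund_unit_eta:
  assumes "\<eta> \<in> {1, 2}" "e = (-1) ^ kdelta \<eta> 2"
    and eps: "fund_unit (int (\<eta>*q*r*s)) = of_int \<gamma> + of_int \<gamma>' * sqrt (real (\<eta>*q*r*s))"
  shows "let A = is_nat_square (2 ^ kdelta \<eta> 1 * int q * (\<gamma> - 1));
            B = is_nat_square (2 * int r * (\<gamma> + (-1) ^ kdelta \<eta> 2));
            C = is_nat_square (2 * int s * (\<gamma> + (-1) ^ kdelta \<eta> 2));
            \<epsilon> = fund_unit (int (\<eta>*q*r*s))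
        in ((A \<and> \<not> B \<and> \<not> C) \<or> (\<not> A \<and> B \<and> \<not> C) \<or> (\<not> A \<and> \<not> B \<and> C)) \<and>
           (\<exists>\<gamma>1 \<gamma>2 :: int.
              (A \<longrightarrow> sqrt (real \<eta> * \<epsilon>) = of_int \<gamma>1 * sqrt (real q) + of_int \<gamma>2 * sqrt (real (\<eta>*r*s))
                     \<and> int \<eta> = - int q * \<gamma>1^2 + int (\<eta>*r*s) * \<gamma>2^2) \<and>
              (B \<longrightarrow> sqrt (real \<eta> * \<epsilon>) = of_int \<gamma>1 * sqrt (real (\<eta>*r)) + of_int \<gamma>2 * sqrt (real (q*s))
                     \<and> int \<eta> = (-1) ^ kdelta \<eta> 2 * int (\<eta>*r) * \<gamma>1^2 + (-1) ^ kdelta \<eta> 1 * int (q*s) * \<gamma>2^2) \<and>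
              (C \<longrightarrow> sqrt (real \<eta> * \<epsilon>) = of_int \<gamma>1 * sqrt (real (\<eta>*s)) + of_int \<gamma>2 * sqrt (real (q*r))
                     \<and> int \<eta> = (-1) ^ kdelta \<eta> 2 * int (\<eta>*s) * \<gamma>1^2 + (-1) ^ kdelta \<eta> 1 * int (q*r) * \<gamma>2^2))"
proof -
  note pell = fund_unit_mqrs_pell[OF assms(1) eps]
  consider "\<eta> = 1" "e = 1" | "\<eta> = 2" "e = -1"
    using assms(1,2) by (auto simp: kdelta_def)
  then show ?thesis
  proof cases
    case 1
    have eps': "fund_unit (int (q * r * s)) = of_int \<gamma> + of_int \<gamma>' * sqrt (real (q * r * s))"
      using eps 1 by simp
    have "\<not> (is_nat_square (2 * int q * (\<gamma> - 1)) \<and> is_nat_square (2 * int r * (\<gamma> + 1)))"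
      by (rule not_both_is_nat_square_pell[OF pell(3) _ int_primes(3), where m = 1 and c = "2 * int q * int r"])
        (use pell(2) 1 primes_not_dvd primes_gt_2 in \<open>simp_all add: algebra_simps power2_eq_square\<close>)
    moreover have "\<not> (is_nat_square (2 * int q * (\<gamma> - 1)) \<and> is_nat_square (2 * int s * (\<gamma> + 1)))"
      by (rule not_both_is_nat_square_pell[OF pell(3) _ int_primes(2), where m = 1 and c = "2 * int q * int s"])
        (use pell(2) 1 primes_not_dvd primes_gt_2 in \<open>simp_all add: algebra_simps power2_eq_square\<close>)
    moreover have "\<not> (is_nat_square (2 * int r * (\<gamma> + 1)) \<and> is_nat_square (2 * int s * (\<gamma> + 1)))"
      by (rule not_both_is_nat_square_common_factor[OF int_primes(2), where m = "int s" and c = 2])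
        (use pell(1) primes_not_dvd in \<open>simp_all add: algebra_simps\<close>)
    ultimately show ?thesis
      by (cases rule: sqrt_fund_unit_qrs_residue[OF \<open>e = 1\<close> eps']) (use 1 in \<open>auto simp: Let_def kdelta_def\<close>)
  next
    case 2
    have eps': "fund_unit (int (2 * q * r * s)) = of_int \<gamma> + of_int \<gamma>' * sqrt (real (2 * q * r * s))"
      using eps 2 by simp
    have "\<not> (is_nat_square (int q * (\<gamma> - 1)) \<and> is_nat_square (2 * int r * (\<gamma> - 1)))"
      by (rule not_both_is_nat_square_common_factor[OF int_primes(4), where m = "int q * int r" and c = 1])
        (use pell(1) prime_q prime_r primes_gt_2 in \<open>simp_all add: prime_odd_nat\<close>)
    moreover have "\<not> (is_nat_square (int q * (\<gamma> - 1)) \<and> is_nat_square (2 * int s * (\<gamma> - 1)))"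
      by (rule not_both_is_nat_square_common_factor[OF int_primes(4), where m = "int q * int s" and c = 1])
        (use pell(1) prime_q prime_s primes_gt_2 in \<open>simp_all add: prime_odd_nat\<close>)
    moreover have "\<not> (is_nat_square (2 * int r * (\<gamma> - 1)) \<and> is_nat_square (2 * int s * (\<gamma> - 1)))"
      by (rule not_both_is_nat_square_common_factor[OF int_primes(2), where m = "int s" and c = 2])
        (use pell(1) primes_not_dvd in \<open>simp_all add: algebra_simps\<close>)
    ultimately show ?thesis
      by (cases rule: sqrt_fund_unit_2qrs_nonresidue[OF \<open>e = -1\<close> eps']) (use 2 in \<open>auto simp: Let_def kdelta_def\<close>)
  qed
qed

lemma sqrt_fund_unit_rho:
  assumes "\<rho> \<in> {1, 2}" "e = (-1) ^ kdelta \<rho> 1"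
    and eps: "fund_unit (int (\<rho>*q*r*s)) = of_int x + of_int y * sqrt (real (\<rho>*q*r*s))"
  shows "let A = is_nat_square (2 ^ kdelta \<rho> 2 * int q * (x + 1));
            B = is_nat_square (2 ^ kdelta \<rho> 2 * int q * (x - 1));
            \<epsilon> = fund_unit (int (\<rho>*q*r*s))
        in ((A \<and> \<not> B) \<or> (\<not> A \<and> B)) \<and>
           (\<exists>y1 y2 :: int.
              (A \<longrightarrow> sqrt (2 * \<epsilon>) = of_int y1 * sqrt (real (\<rho>*q)) + of_int y2 * sqrt (real (r*s))
                     \<and> 2 = int (\<rho>*q) * y1^2 - int (r*s) * y2^2) \<and>
              (B \<longrightarrow> sqrt (2 * \<epsilon>) = of_int y1 * sqrt (real (\<rho>*q)) + of_int y2 * sqrt (real (r*s))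
                     \<and> 2 = - int (\<rho>*q) * y1^2 + int (r*s) * y2^2))"
proof -
  note pell = fund_unit_mqrs_pell[OF assms(1) eps]
  consider "\<rho> = 2" "e = 1" | "\<rho> = 1" "e = -1"
    using assms(1,2) by (auto simp: kdelta_def)
  then show ?thesis
  proof cases
    case 1
    have eps': "fund_unit (int (2 * q * r * s)) = of_int x + of_int y * sqrt (real (2 * q * r * s))"
      using eps 1 by simp
    have "\<not> (is_nat_square (2 * int q * (x - 1)) \<and> is_nat_square (2 * int q * (x + 1)))"
      by (rule not_both_is_nat_square_pell[OF pell(3) _ int_primes(1), where m = "2 * int r * int s" and c = "2 * int q"])
        (use pell(2) 1 primes_not_dvd primes_gt_2 in \<open>simp_all add: algebra_simps power2_eq_square prime_dvd_mult_iff int_primes prime_q\<close>)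
    then show ?thesis
      by (cases rule: sqrt_fund_unit_2qrs_residue[OF \<open>e = 1\<close> eps']) (use 1 in \<open>auto simp: Let_def kdelta_def\<close>)
  next
    case 2
    have eps': "fund_unit (int (q * r * s)) = of_int x + of_int y * sqrt (real (q * r * s))"
      using eps 2 by simp
    have "\<not> (is_nat_square (int q * (x - 1)) \<and> is_nat_square (int q * (x + 1)))"
      by (rule not_both_is_nat_square_pell[OF pell(3) _ int_primes(1), where m = "int r * int s" and c = "int q"])
        (use pell(2) 2 primes_not_dvd primes_gt_2 in \<open>simp_all add: algebra_simps power2_eq_square prime_dvd_mult_iff int_primes prime_q\<close>)
    then show ?thesis
      by (cases rule: sqrt_fund_unit_qrs_nonresidue[OF \<open>e = -1\<close> eps']) (use 2 in \<open>auto simp: Let_def kdelta_def\<close>)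
  qed
qed

end

theorem mainTheorem1:
  fixes \<eta> \<rho> q r s :: nat
  assumes "\<eta> \<in> {1, 2}" and "\<rho> \<in> {1, 2}" and "\<eta> \<noteq> \<rho>"
    and "prime q" and "prime r" and "prime s"
    and "q mod 4 = 3" and "r mod 8 = 5" and "s mod 8 = 5"
    and "Legendre (int q) (int r) = (-1) ^ kdelta \<eta> 2"
    and "Legendre (int q) (int s) = (-1) ^ kdelta \<eta> 2"
    and "Legendre (int r) (int s) = 1"
  shows
   "(\<forall>\<gamma> \<gamma>' :: int.
       fund_unit (int (\<eta>*q*r*s)) = of_int \<gamma> + of_int \<gamma>' * sqrt (real (\<eta>*q*r*s)) \<longrightarrow>
       (let A = is_nat_square (2 ^ kdelta \<eta> 1 * int q * (\<gamma> - 1));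
            B = is_nat_square (2 * int r * (\<gamma> + (-1) ^ kdelta \<eta> 2));
            C = is_nat_square (2 * int s * (\<gamma> + (-1) ^ kdelta \<eta> 2));
            \<epsilon> = fund_unit (int (\<eta>*q*r*s))
        in ((A \<and> \<not> B \<and> \<not> C) \<or> (\<not> A \<and> B \<and> \<not> C) \<or> (\<not> A \<and> \<not> B \<and> C)) \<and>
           (\<exists>\<gamma>1 \<gamma>2 :: int.
              (A \<longrightarrow> sqrt (real \<eta> * \<epsilon>) = of_int \<gamma>1 * sqrt (real q) + of_int \<gamma>2 * sqrt (real (\<eta>*r*s))
                     \<and> int \<eta> = - int q * \<gamma>1^2 + int (\<eta>*r*s) * \<gamma>2^2) \<and>
              (B \<longrightarrow> sqrt (real \<eta> * \<epsilon>) = of_int \<gamma>1 * sqrt (real (\<eta>*r)) + of_int \<gamma>2 * sqrt (real (q*s))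
                     \<and> int \<eta> = (-1) ^ kdelta \<eta> 2 * int (\<eta>*r) * \<gamma>1^2 + (-1) ^ kdelta \<eta> 1 * int (q*s) * \<gamma>2^2) \<and>
              (C \<longrightarrow> sqrt (real \<eta> * \<epsilon>) = of_int \<gamma>1 * sqrt (real (\<eta>*s)) + of_int \<gamma>2 * sqrt (real (q*r))
                     \<and> int \<eta> = (-1) ^ kdelta \<eta> 2 * int (\<eta>*s) * \<gamma>1^2 + (-1) ^ kdelta \<eta> 1 * int (q*r) * \<gamma>2^2)))) \<and>
    (\<forall>x y :: int.
       fund_unit (int (\<rho>*q*r*s)) = of_int x + of_int y * sqrt (real (\<rho>*q*r*s)) \<longrightarrow>
       (let A = is_nat_square (2 ^ kdelta \<rho> 2 * int q * (x + 1));
            B = is_nat_square (2 ^ kdelta \<rho> 2 * int q * (x - 1));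
            \<epsilon> = fund_unit (int (\<rho>*q*r*s))
        in ((A \<and> \<not> B) \<or> (\<not> A \<and> B)) \<and>
           (\<exists>y1 y2 :: int.
              (A \<longrightarrow> sqrt (2 * \<epsilon>) = of_int y1 * sqrt (real (\<rho>*q)) + of_int y2 * sqrt (real (r*s))
                     \<and> 2 = int (\<rho>*q) * y1^2 - int (r*s) * y2^2) \<and>
              (B \<longrightarrow> sqrt (2 * \<epsilon>) = of_int y1 * sqrt (real (\<rho>*q)) + of_int y2 * sqrt (real (r*s))
                     \<and> 2 = - int (\<rho>*q) * y1^2 + int (r*s) * y2^2))))"
proof -
  interpret qrs_primes q r s "(-1) ^ kdelta \<eta> 2"
    using assms(4-12) by unfold_locales
  have "(-1) ^ kdelta \<eta> 2 = ((-1) ^ kdelta \<rho> 1 :: int)"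
    using assms(1-3) by (auto simp: kdelta_def)
  then show ?thesis
    using sqrt_fund_unit_eta[OF assms(1) refl] sqrt_fund_unit_rho[OF assms(2)] by blast
qed

end
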